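(* Let $F=F(N,\mathcal D)$ be a connected GSC. Suppose there is $m\ge1$ and a partition $\mathcal D^m=I\cup J$ with $I\cap J=\varnothing$ such that $\big(\bigcup_{\mathbf i\in I}\varphi_{\mathbf i}(F)\big)\cap\big(\bigcup_{\mathbf i\in J}\varphi_{\mathbf i}(F)\big)=\{x\}$ for some $x\in F$. Then $F$ is fragile.
   Context: GSC: $N\ge2$, $\mathcal D\subset\{0,\dots,N-1\}^2$ with $1<|\mathcal D|<N^2$, $\varphi_i(x)=\frac1N(x+i)$, $F$ the attractor $F=\bigcup_{i\in\mathcal D}\varphi_i(F)$; $\varphi_{i_1\cdots i_m}=\varphi_{i_1}\circ\cdots\circ\varphi_{i_m}$. $F$ is fragile if there is a partition $\mathcal D=\mathcal D_1\cup\mathcal D_2$ into disjoint nonempty sets with $\big(\bigcup_{i\in\mathcal D_1}\varphi_i(F)\big)\cap\big(\bigcup_{i\in\mathcal D_2}\varphi_i(F)\big)$ a singleton. *)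

theory Defs
  imports "HOL-Analysis.Analysis"
begin

definition gsc_digits :: "nat \<Rightarrow> (nat \<times> nat) set \<Rightarrow> bool" where
  "gsc_digits N D \<longleftrightarrow> N \<ge> 2 \<and> D \<subseteq> {0..<N} \<times> {0..<N} \<and> 1 < card D \<and> card D < N^2"

definition phi :: "nat \<Rightarrow> nat \<times> nat \<Rightarrow> real \<times> real \<Rightarrow> real \<times> real" where
  "phi N i x = (1 / real N) *\<^sub>R (x + (real (fst i), real (snd i)))"

text \<open>Composition along a word: phi_{i1...im} = phi_{i1} o ... o phi_{im}.\<close>
definition phiw :: "nat \<Rightarrow> (nat \<times> nat) list \<Rightarrow> real \<times> real \<Rightarrow> real \<times> real" where
  "phiw N w = foldr (\<lambda>i f. phi N i \<circ> f) w id"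

definition gsc_attractor :: "nat \<Rightarrow> (nat \<times> nat) set \<Rightarrow> (real \<times> real) set" where
  "gsc_attractor N D = (THE F. compact F \<and> F \<noteq> {} \<and> F = (\<Union>i\<in>D. phi N i ` F))"

definition words :: "(nat \<times> nat) set \<Rightarrow> nat \<Rightarrow> (nat \<times> nat) list set" where
  "words D m = {w. length w = m \<and> set w \<subseteq> D}"

definition fragile :: "nat \<Rightarrow> (nat \<times> nat) set \<Rightarrow> bool" where
  "fragile N D \<longleftrightarrow> (\<exists>D1 D2. D1 \<union> D2 = D \<and> D1 \<inter> D2 = {} \<and> D1 \<noteq> {} \<and> D2 \<noteq> {} \<and>
      (\<exists>y. (\<Union>i\<in>D1. phi N i ` gsc_attractor N D) \<inter> (\<Union>i\<in>D2. phi N i ` gsc_attractor N D) = {y}))"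

end

theory Submission
  imports Defs
begin

text \<open>
  Induction on the word length \<open>m\<close>, using that \<open>F\<close> is the union of the images
  \<open>\<phi>\<^sub>w(F)\<close> over all words \<open>w\<close> of any fixed length. If no letter begins words of both
  \<open>I\<close> and \<open>J\<close>, then \<open>I\<close> and \<open>J\<close> consist of whole cylinders \<open>i # D\<^sup>m\<^sup>-\<^sup>1\<close>, and the
  sets of first letters of \<open>I\<close> and of \<open>J\<close> form a fragile partition of \<open>D\<close>.
  Otherwise some letter \<open>i\<close> begins words of both; the tails \<open>{w. i # w \<in> I}\<close> and
  \<open>{w. i # w \<in> J}\<close> partition \<open>D\<^sup>m\<^sup>-\<^sup>1\<close>, and the corresponding unions \<open>A\<close>, \<open>B\<close> are
  nonempty closed sets covering the connected \<open>F\<close>, so they meet. As \<open>\<phi>\<^sub>i\<close> is injective and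
  \<open>\<phi>\<^sub>i(A \<inter> B) \<subseteq> {x}\<close>, the set \<open>A \<inter> B\<close> is a singleton, and the induction hypothesis
  applies to the shorter partition.
\<close>

lemma phiw_Nil [simp]: "phiw N [] = id"
  by (simp add: phiw_def)

lemma phiw_Cons [simp]: "phiw N (i # w) = phi N i \<circ> phiw N w"
  by (simp add: phiw_def)

lemma words_0 [simp]: "words D 0 = {[]}"
  by (auto simp: words_def)

lemma Cons_in_words_Suc_iff [simp]: "i # w \<in> words D (Suc n) \<longleftrightarrow> i \<in> D \<and> w \<in> words D n"
  by (auto simp: words_def)

lemma words_SucE:
  assumes "v \<in> words D (Suc n)"
  obtains i w where "v = i # w" "i \<in> D" "w \<in> words D n"
  using assms by (cases v) (auto simp: words_def)

lemma finite_words: "finite D \<Longrightarrow> finite (words D n)"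
  using finite_lists_length_eq[of D n] by (simp add: words_def conj_commute)

lemma hd_words_Suc: "hd ` words D (Suc n) = D"
proof (intro equalityI subsetI)
  fix i assume "i \<in> D"
  then have "i # replicate n i \<in> words D (Suc n)"
    by (auto simp: words_def)
  then show "i \<in> hd ` words D (Suc n)"
    by (metis image_eqI list.sel(1))
qed (auto elim: words_SucE)

lemma inj_phi: "N > 0 \<Longrightarrow> inj (phi N i)"
  by (auto simp: inj_def phi_def)

lemma continuous_on_phi: "continuous_on A (phi N i)"
  unfolding phi_def by (intro continuous_intros)

lemma continuous_on_phiw: "continuous_on A (phiw N w)"
proof (induction w arbitrary: A)
  case (Cons i w)
  then show ?case
    by (simp only: phiw_Cons) (rule continuous_on_compose[OF Cons continuous_on_phi])
qed (simp add: continuous_on_id)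

lemma dist_phiw: "dist (phiw N w a) (phiw N w b) = dist a b / real N ^ length w"
proof (induction w)
  case (Cons i w)
  have "phi N i u - phi N i v = (1 / real N) *\<^sub>R (u - v)" for u v
    by (simp add: phi_def scaleR_right_distrib scaleR_diff_right)
  with Cons show ?case
    by (simp add: dist_norm)
qed simp

lemma compact_phiw_image: "compact F \<Longrightarrow> compact (phiw N w ` F)"
  by (rule compact_continuous_image[OF continuous_on_phiw])

lemma self_similar_words:
  assumes "F = (\<Union>i\<in>D. phi N i ` F)"
  shows "F = (\<Union>w\<in>words D n. phiw N w ` F)"
proof (induction n)
  case (Suc n)
  have "(\<Union>w\<in>words D (Suc n). phiw N w ` F) = (\<Union>i\<in>D. phi N i ` (\<Union>w\<in>words D n. phiw N w ` F))"
  proof (intro equalityI subsetI)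
    fix y assume "y \<in> (\<Union>w\<in>words D (Suc n). phiw N w ` F)"
    then obtain v s where "v \<in> words D (Suc n)" "s \<in> F" "y = phiw N v s"
      by auto
    then obtain i w where "i \<in> D" "w \<in> words D n" "y = phi N i (phiw N w s)"
      by (auto elim!: words_SucE)
    with \<open>s \<in> F\<close> show "y \<in> (\<Union>i\<in>D. phi N i ` (\<Union>w\<in>words D n. phiw N w ` F))"
      by blast
  next
    fix y assume "y \<in> (\<Union>i\<in>D. phi N i ` (\<Union>w\<in>words D n. phiw N w ` F))"
    then obtain i w s where "i \<in> D" "w \<in> words D n" "s \<in> F" "y = phiw N (i # w) s"
      by auto
    then show "y \<in> (\<Union>w\<in>words D (Suc n). phiw N w ` F)"
      by (metis Cons_in_words_Suc_iff UN_I image_eqI)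
  qed
  also have "\<dots> = F"
    by (simp only: Suc.IH[symmetric] assms[symmetric])
  finally show ?case ..
qed simp

lemma UN_phiw_Cons_words:
  assumes "F = (\<Union>i\<in>D. phi N i ` F)"
  shows "(\<Union>w\<in>words D n. phiw N (i # w) ` F) = phi N i ` F"
proof -
  have "(\<Union>w\<in>words D n. phiw N (i # w) ` F) = phi N i ` (\<Union>w\<in>words D n. phiw N w ` F)"
    by (simp add: image_UN image_comp)
  also have "\<dots> = phi N i ` F"
    by (simp only: self_similar_words[OF assms, symmetric])
  finally show ?thesis .
qed

lemma INT_UN_decseq_finite:
  fixes B :: "'i \<Rightarrow> nat \<Rightarrow> 'a set"
  assumes "finite D" and dec: "\<And>i. i \<in> D \<Longrightarrow> decseq (B i)"
  shows "(\<Inter>n. \<Union>i\<in>D. B i n) = (\<Union>i\<in>D. \<Inter>n. B i n)"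
proof (intro equalityI subsetI)
  fix y assume y: "y \<in> (\<Inter>n. \<Union>i\<in>D. B i n)"
  show "y \<in> (\<Union>i\<in>D. \<Inter>n. B i n)"
  proof (rule ccontr)
    assume "y \<notin> (\<Union>i\<in>D. \<Inter>n. B i n)"
    then have "\<forall>i\<in>D. \<exists>n. y \<notin> B i n"
      by blast
    then obtain n where n: "\<And>i. i \<in> D \<Longrightarrow> y \<notin> B i (n i)"
      by metis
    define M where "M = Max (n ` D)"
    obtain i where i: "i \<in> D" "y \<in> B i M"
      using y by blast
    have "n i \<le> M"
      using i(1) \<open>finite D\<close> by (simp add: M_def)
    then have "B i M \<subseteq> B i (n i)"
      by (rule decseqD[OF dec[OF i(1)]])
    with n i show False
      by blast
  qed
qed auto

lemma gsc_attractor_exists: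
  assumes "gsc_digits N D"
  obtains F where "compact F" "F \<noteq> {}" "F = (\<Union>i\<in>D. phi N i ` F)"
proof -
  have N: "N \<ge> 2" and D_sub: "D \<subseteq> {0..<N} \<times> {0..<N}" and "1 < card D"
    using assms by (auto simp: gsc_digits_def)
  then have "finite D" "D \<noteq> {}"
    using finite_subset by fastforce+
  define H where "H S = (\<Union>i\<in>D. phi N i ` S)" for S :: "(real \<times> real) set"
  define Q where "Q = {0..1::real} \<times> {0..1::real}"
  define A where "A n = (H ^^ n) Q" for n
  have A_Suc: "A (Suc n) = H (A n)" for n
    by (simp add: A_def)
  have H_mono: "S \<subseteq> T \<Longrightarrow> H S \<subseteq> H T" for S T
    by (auto simp: H_def)
  have unit: "0 \<le> (a + real j) / real N \<and> (a + real j) / real N \<le> 1"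
    if "0 \<le> a" "a \<le> 1" "j < N" for a :: real and j
  proof -
    have "real j + 1 \<le> real N"
      using that by linarith
    then show ?thesis
      using that N by (simp add: divide_simps)
  qed
  have HQ: "H Q \<subseteq> Q"
  proof
    fix y assume "y \<in> H Q"
    then obtain i a b where i: "i \<in> D" and ab: "a \<in> {0..1}" "b \<in> {0..1}" and y: "y = phi N i (a, b)"
      by (auto simp: H_def Q_def)
    have "fst i < N" "snd i < N"
      using i D_sub by auto
    then show "y \<in> Q"
      using unit[of a "fst i"] unit[of b "snd i"] ab
      by (simp add: y Q_def phi_def add_divide_distrib[symmetric])
  qed
  have "A (Suc n) \<subseteq> A n" for n
    by (induction n) (simp_all add: A_Suc H_mono, simp add: A_def HQ)
  then have dec: "decseq A"
    by (rule decseq_SucI)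
  have A_compact: "compact (A n)" for n
  proof (induction n)
    case (Suc n)
    then show ?case
      unfolding A_Suc H_def using \<open>finite D\<close>
      by (intro compact_UN compact_continuous_image[OF continuous_on_phi]) auto
  qed (simp add: A_def Q_def compact_Times)
  have A_nonempty: "A n \<noteq> {}" for n
    by (induction n) (use \<open>D \<noteq> {}\<close> in \<open>auto simp: A_Suc H_def A_def Q_def\<close>)
  define F where "F = \<Inter>(range A)"
  have "H F = (\<Union>i\<in>D. \<Inter>n. phi N i ` A n)"
    unfolding H_def F_def using N by (simp add: image_INT[OF inj_phi])
  also have "\<dots> = (\<Inter>n. \<Union>i\<in>D. phi N i ` A n)"
    using \<open>finite D\<close> dec
    by (intro INT_UN_decseq_finite[symmetric]) (auto simp: decseq_def image_mono)
  also have "\<dots> = (\<Inter>n. A (Suc n))"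
    by (simp add: A_Suc H_def)
  also have "\<dots> = F"
    unfolding F_def using decseq_SucD[OF dec] by blast
  finally have "F = H F" ..
  moreover have "compact F"
    unfolding F_def using A_compact by (auto intro: compact_Inter)
  moreover have "F \<noteq> {}"
    unfolding F_def using A_compact A_nonempty decseqD[OF dec] by (rule compact_nest)
  ultimately show ?thesis
    using that by (simp add: H_def)
qed

lemma self_similar_subset:
  assumes N: "N > 1"
    and K: "compact K" "K = (\<Union>i\<in>D. phi N i ` K)"
    and L: "compact L" "L \<noteq> {}" "L = (\<Union>i\<in>D. phi N i ` L)"
  shows "K \<subseteq> L"
proof
  fix y assume "y \<in> K"
  obtain l where "l \<in> L"
    using L by auto
  define d where "d = diameter (K \<union> L)"
  have "bounded (K \<union> L)"
    using K L by (simp add: compact_imp_bounded)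
  have le: "infdist y L \<le> d * (1 / real N) ^ n" for n
  proof -
    have "y \<in> (\<Union>w\<in>words D n. phiw N w ` K)"
      using self_similar_words[OF K(2), of n, THEN equalityD1] \<open>y \<in> K\<close> ..
    then obtain w k where w: "w \<in> words D n" "k \<in> K" "y = phiw N w k"
      by blast
    have "phiw N w l \<in> (\<Union>w\<in>words D n. phiw N w ` L)"
      using w(1) \<open>l \<in> L\<close> by blast
    then have "phiw N w l \<in> L"
      using self_similar_words[OF L(3), of n, THEN equalityD2] ..
    then have "infdist y L \<le> dist (phiw N w k) (phiw N w l)"
      unfolding w(3) by (rule infdist_le)
    also have "\<dots> = dist k l * (1 / real N) ^ n"
      using w(1) by (simp add: dist_phiw words_def power_one_over)
    also have "\<dots> \<le> d * (1 / real N) ^ n"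
      using diameter_bounded_bound[OF \<open>bounded (K \<union> L)\<close>, of k l] w(2) \<open>l \<in> L\<close>
      by (auto simp: d_def intro!: mult_right_mono)
    finally show ?thesis .
  qed
  have "(\<lambda>n. d * (1 / real N) ^ n) \<longlonglongrightarrow> 0"
    using N by (intro tendsto_mult_right_zero LIMSEQ_power_zero) simp
  then have "infdist y L \<le> 0"
    by (rule LIMSEQ_le_const) (use le in blast)
  then have "infdist y L = 0"
    using infdist_nonneg[of y L] by linarith
  then show "y \<in> L"
    using in_closed_iff_infdist_zero[OF compact_imp_closed[OF L(1)] L(2)] by simp
qed

lemma gsc_attractor_self_similar:
  assumes "gsc_digits N D"
  shows "compact (gsc_attractor N D)" "gsc_attractor N D \<noteq> {}"
    "gsc_attractor N D = (\<Union>i\<in>D. phi N i ` gsc_attractor N D)"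
proof -
  have "N > 1"
    using assms by (simp add: gsc_digits_def)
  obtain F where F: "compact F" "F \<noteq> {}" "F = (\<Union>i\<in>D. phi N i ` F)"
    using gsc_attractor_exists[OF assms] .
  have "\<exists>!F. compact F \<and> F \<noteq> {} \<and> F = (\<Union>i\<in>D. phi N i ` F)"
    using F self_similar_subset[OF \<open>N > 1\<close>] by (intro ex1I[of _ F]) (blast, blast intro: equalityI)
  from theI'[OF this] show "compact (gsc_attractor N D)" "gsc_attractor N D \<noteq> {}"
    "gsc_attractor N D = (\<Union>i\<in>D. phi N i ` gsc_attractor N D)"
    unfolding gsc_attractor_def by blast+
qed

definition fragile_wrt :: "nat \<Rightarrow> (nat \<times> nat) set \<Rightarrow> (real \<times> real) set \<Rightarrow> bool" where
  "fragile_wrt N D F \<longleftrightarrow> (\<exists>D1 D2. D1 \<union> D2 = D \<and> D1 \<inter> D2 = {} \<and> D1 \<noteq> {} \<and> D2 \<noteq> {} \<and>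
      (\<exists>y. (\<Union>i\<in>D1. phi N i ` F) \<inter> (\<Union>i\<in>D2. phi N i ` F) = {y}))"

lemma fragile_iff_fragile_wrt: "fragile N D \<longleftrightarrow> fragile_wrt N D (gsc_attractor N D)"
  by (simp add: fragile_def fragile_wrt_def)

lemma words_partition_eq_cylinders:
  assumes "I \<union> J = words D (Suc k)" "hd ` I \<inter> hd ` J = {}"
  shows "I = (\<Union>i\<in>hd ` I. (#) i ` words D k)"
proof (intro equalityI subsetI)
  fix v assume "v \<in> I"
  with assms(1) obtain i w where "v = i # w" "w \<in> words D k"
    by (blast elim: words_SucE)
  with \<open>v \<in> I\<close> show "v \<in> (\<Union>i\<in>hd ` I. (#) i ` words D k)"
    by force
next
  fix v assume "v \<in> (\<Union>i\<in>hd ` I. (#) i ` words D k)"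
  then obtain i w where i: "i \<in> hd ` I" and w: "w \<in> words D k" and v: "v = i # w"
    by blast
  have "i \<in> D"
    using i assms(1) hd_words_Suc by blast
  with w v have "v \<in> I \<union> J"
    using assms(1) by simp
  moreover have "v \<notin> J"
    using i v assms(2) by (metis disjoint_iff image_eqI list.sel(1))
  ultimately show "v \<in> I"
    by blast
qed

lemma UN_phiw_eq_UN_phi_hd:
  assumes inv: "F = (\<Union>i\<in>D. phi N i ` F)"
    and "I \<union> J = words D (Suc k)" "hd ` I \<inter> hd ` J = {}"
  shows "(\<Union>w\<in>I. phiw N w ` F) = (\<Union>i\<in>hd ` I. phi N i ` F)"
proof -
  have "(\<Union>w\<in>I. phiw N w ` F) = (\<Union>w\<in>(\<Union>i\<in>hd ` I. (#) i ` words D k). phiw N w ` F)"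
    using words_partition_eq_cylinders[OF assms(2,3)] by (rule arg_cong)
  also have "\<dots> = (\<Union>i\<in>hd ` I. \<Union>w\<in>words D k. phiw N (i # w) ` F)"
    by (simp add: image_image)
  also have "\<dots> = (\<Union>i\<in>hd ` I. phi N i ` F)"
    by (simp only: UN_phiw_Cons_words[OF inv])
  finally show ?thesis .
qed

lemma fragile_wrt_if_hd_disjoint:
  assumes inv: "F = (\<Union>i\<in>D. phi N i ` F)"
    and IJ: "I \<union> J = words D (Suc k)" "hd ` I \<inter> hd ` J = {}"
    and x: "(\<Union>w\<in>I. phiw N w ` F) \<inter> (\<Union>w\<in>J. phiw N w ` F) = {x}"
  shows "fragile_wrt N D F"
  unfolding fragile_wrt_def
proof (intro exI conjI)
  show "hd ` I \<union> hd ` J = D"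
    using IJ(1) hd_words_Suc by (metis image_Un)
  show "hd ` I \<noteq> {}" "hd ` J \<noteq> {}"
    using x by auto
  show "(\<Union>i\<in>hd ` I. phi N i ` F) \<inter> (\<Union>i\<in>hd ` J. phi N i ` F) = {x}"
    using x UN_phiw_eq_UN_phi_hd[OF inv IJ] UN_phiw_eq_UN_phi_hd[OF inv, of J I] IJ
    by (simp add: Un_commute Int_commute)
qed (fact IJ(2))

lemma tails_partition_words:
  assumes "I \<union> J = words D (Suc k)" "i \<in> D"
  shows "{w. i # w \<in> I} \<union> {w. i # w \<in> J} = words D k"
proof -
  have "i # w \<in> I \<union> J \<longleftrightarrow> w \<in> words D k" for w
    using assms by simp
  then show ?thesis
    by blast
qed

lemma connected_Un_closed_Int_singleton:
  assumes "connected (A \<union> B)" "closed A" "closed B" "A \<noteq> {}" "B \<noteq> {}"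
    and "inj f" "f ` (A \<inter> B) \<subseteq> {x}"
  shows "\<exists>z. A \<inter> B = {z}"
proof -
  have "A \<inter> B \<noteq> {}"
    using connected_closedD[OF assms(1), of A B] assms(2-5) by blast
  then obtain z where z: "z \<in> A \<inter> B"
    by blast
  have "z' = z" if "z' \<in> A \<inter> B" for z'
    using that z assms(6,7) by (blast dest: injD)
  with z show ?thesis
    by blast
qed

lemma tails_intersection_singleton:
  assumes inv: "F = (\<Union>i\<in>D. phi N i ` F)"
    and F: "compact F" "F \<noteq> {}" "connected F" and "N > 0" "finite D"
    and IJ: "I \<union> J = words D (Suc k)"
    and x: "(\<Union>w\<in>I. phiw N w ` F) \<inter> (\<Union>w\<in>J. phiw N w ` F) = {x}"
    and i: "i \<in> hd ` I \<inter> hd ` J"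
  shows "\<exists>z. (\<Union>w\<in>{w. i # w \<in> I}. phiw N w ` F) \<inter> (\<Union>w\<in>{w. i # w \<in> J}. phiw N w ` F) = {z}"
proof -
  define A where "A = (\<Union>w\<in>{w. i # w \<in> I}. phiw N w ` F)"
  define B where "B = (\<Union>w\<in>{w. i # w \<in> J}. phiw N w ` F)"
  have "i \<in> D"
    using i IJ hd_words_Suc by blast
  have nonempty_words: "v \<noteq> []" if "v \<in> I \<union> J" for v
    using that IJ by (auto simp: words_def)
  have "\<exists>w. i # w \<in> I" "\<exists>w. i # w \<in> J"
    using i nonempty_words by (metis IntD1 IntD2 Un_iff imageE list.collapse)+
  then have "A \<noteq> {}" "B \<noteq> {}"
    using F(2) by (auto simp: A_def B_def)
  have tails: "{w. i # w \<in> I} \<union> {w. i # w \<in> J} = words D k"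
    by (rule tails_partition_words[OF IJ \<open>i \<in> D\<close>])
  have "finite {w. i # w \<in> I}" "finite {w. i # w \<in> J}"
    using tails finite_words[OF \<open>finite D\<close>, of k] by (metis finite_Un)+
  then have "closed A" "closed B"
    unfolding A_def B_def using F(1)
    by (auto intro!: compact_imp_closed compact_UN compact_phiw_image)
  have "F = A \<union> B"
    unfolding A_def B_def UN_Un[symmetric] tails by (rule self_similar_words[OF inv])
  have "phi N i ` A \<subseteq> (\<Union>w\<in>I. phiw N w ` F)" "phi N i ` B \<subseteq> (\<Union>w\<in>J. phiw N w ` F)"
    by (auto simp: A_def B_def image_comp)
  with x have "phi N i ` (A \<inter> B) \<subseteq> {x}"
    by blast
  with \<open>F = A \<union> B\<close> F(3) have "\<exists>z. A \<inter> B = {z}"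
    using connected_Un_closed_Int_singleton \<open>closed A\<close> \<open>closed B\<close> \<open>A \<noteq> {}\<close> \<open>B \<noteq> {}\<close>
      inj_phi[OF \<open>N > 0\<close>] by metis
  then show ?thesis
    unfolding A_def B_def .
qed

lemma fragile_wrt_if_words_split:
  assumes inv: "F = (\<Union>i\<in>D. phi N i ` F)"
    and F: "compact F" "F \<noteq> {}" "connected F" and "N > 0" "finite D"
  shows "I \<union> J = words D k \<Longrightarrow> I \<inter> J = {} \<Longrightarrow>
    (\<Union>w\<in>I. phiw N w ` F) \<inter> (\<Union>w\<in>J. phiw N w ` F) = {x} \<Longrightarrow> fragile_wrt N D F"
proof (induction k arbitrary: I J x)
  case 0
  have "I = {} \<or> J = {}"
  proof (rule ccontr)
    assume "\<not> (I = {} \<or> J = {})"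
    then obtain a b where "a \<in> I" "b \<in> J"
      by blast
    with "0.prems"(1) have "a = []" "b = []"
      by auto
    with \<open>a \<in> I\<close> \<open>b \<in> J\<close> "0.prems"(2) show False
      by blast
  qed
  with "0.prems"(3) show ?case
    by (metis UN_empty Int_empty_left Int_empty_right insert_not_empty)
next
  case (Suc k)
  show ?case
  proof (cases "hd ` I \<inter> hd ` J = {}")
    case True
    with Suc.prems show ?thesis
      using fragile_wrt_if_hd_disjoint[OF inv] by blast
  next
    case False
    then obtain i where i: "i \<in> hd ` I \<inter> hd ` J"
      by blast
    then have "i \<in> D"
      using Suc.prems(1) hd_words_Suc by blast
    obtain z where "(\<Union>w\<in>{w. i # w \<in> I}. phiw N w ` F) \<inter> (\<Union>w\<in>{w. i # w \<in> J}. phiw N w ` F) = {z}"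
      using tails_intersection_singleton[OF assms Suc.prems(1,3) i] by blast
    moreover have "{w. i # w \<in> I} \<inter> {w. i # w \<in> J} = {}"
      using Suc.prems(2) by blast
    ultimately show ?thesis
      using Suc.IH tails_partition_words[OF Suc.prems(1) \<open>i \<in> D\<close>] by blast
  qed
qed

theorem mainTheorem9:
  fixes N :: nat and D :: "(nat \<times> nat) set" and m :: nat
    and I J :: "(nat \<times> nat) list set" and x :: "real \<times> real"
  assumes "gsc_digits N D"
    and "connected (gsc_attractor N D)"
    and "m \<ge> 1"
    and "I \<union> J = words D m" and "I \<inter> J = {}"
    and "x \<in> gsc_attractor N D"
    and "(\<Union>w\<in>I. phiw N w ` gsc_attractor N D) \<inter> (\<Union>w\<in>J. phiw N w ` gsc_attractor N D) = {x}"
  shows "fragile N D"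
proof -
  have "N > 0" "finite D"
    using assms(1) finite_subset[of D "{0..<N} \<times> {0..<N}"] by (auto simp: gsc_digits_def)
  with gsc_attractor_self_similar[OF assms(1)] assms(2,4,5,7) show ?thesis
    unfolding fragile_iff_fragile_wrt by (blast intro: fragile_wrt_if_words_split)
qed

end
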